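(* Let $J\subset I$, $w\in W^J$ and $u\in W$ with $l(uw)=l(u)+l(w)$. Write $uw=xv$ with $x\in W^J$ and $v\in W_J$. Then for any $v'\in W$ with $v'\le v$ there exists $u'\in W$ with $u'\le u$ such that $u'w=xv'$.
   Context: $W$ is the Weyl group of a semisimple group with simple reflections $s_i$, $i\in I$, length $l$ and Bruhat order $\le$. For $J\subset I$, $W_J$ is the subgroup generated by $\{s_j:j\in J\}$ and $W^J$ the set of minimal length representatives of $W/W_J$. *)

theory Defs
  imports Main
begin

text \<open>The Weyl group W is given by its Coxeter presentation: generators s_i (i in I),
 relations s_i^2 = 1 and the braid relations (s_i s_j)^(m i j) = 1 for i distinct from j.
 Elements of W are equivalence classes of words (lists over I).\<close>

fun alt :: "'i \<Rightarrow> 'i \<Rightarrow> nat \<Rightarrow> 'i list" where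
  "alt i j 0 = []"
| "alt i j (Suc n) = i # alt j i n"

definition cox_rels :: "('i \<Rightarrow> 'i \<Rightarrow> nat) \<Rightarrow> 'i set \<Rightarrow> ('i list \<times> 'i list) set" where
  "cox_rels m I = {([i, i], []) | i. i \<in> I}
     \<union> {(alt i j (m i j), alt j i (m i j)) | i j. i \<in> I \<and> j \<in> I \<and> i \<noteq> j}"

definition cox_step :: "('i \<Rightarrow> 'i \<Rightarrow> nat) \<Rightarrow> 'i set \<Rightarrow> ('i list \<times> 'i list) set" where
  "cox_step m I = {(xs @ l @ ys, xs @ r @ ys) | xs ys l r.
      xs \<in> lists I \<and> ys \<in> lists I \<and> ((l, r) \<in> cox_rels m I \<or> (r, l) \<in> cox_rels m I)}"

definition cox_eq :: "('i \<Rightarrow> 'i \<Rightarrow> nat) \<Rightarrow> 'i set \<Rightarrow> ('i list \<times> 'i list) set" where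
  "cox_eq m I = Id_on (lists I) \<union> (cox_step m I)\<^sup>+"

definition cox_elem :: "('i \<Rightarrow> 'i \<Rightarrow> nat) \<Rightarrow> 'i set \<Rightarrow> 'i list \<Rightarrow> 'i list set" where
  "cox_elem m I w = cox_eq m I `` {w}"

definition cox_group :: "('i \<Rightarrow> 'i \<Rightarrow> nat) \<Rightarrow> 'i set \<Rightarrow> 'i list set set" where
  "cox_group m I = cox_elem m I ` lists I"

definition cox_mult :: "('i \<Rightarrow> 'i \<Rightarrow> nat) \<Rightarrow> 'i set \<Rightarrow> 'i list set \<Rightarrow> 'i list set \<Rightarrow> 'i list set" where
  "cox_mult m I a b = \<Union> {cox_elem m I (u @ v) | u v. u \<in> a \<and> v \<in> b}"

definition cox_len :: "'i list set \<Rightarrow> nat" where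
  "cox_len a = (LEAST n. \<exists>w \<in> a. length w = n)"

definition parabolic :: "('i \<Rightarrow> 'i \<Rightarrow> nat) \<Rightarrow> 'i set \<Rightarrow> 'i set \<Rightarrow> 'i list set set" where
  "parabolic m I J = cox_elem m I ` lists J"

definition min_reps :: "('i \<Rightarrow> 'i \<Rightarrow> nat) \<Rightarrow> 'i set \<Rightarrow> 'i set \<Rightarrow> 'i list set set" where
  "min_reps m I J = {x \<in> cox_group m I. \<forall>y \<in> parabolic m I J. cox_len x \<le> cox_len (cox_mult m I x y)}"

definition reflections :: "('i \<Rightarrow> 'i \<Rightarrow> nat) \<Rightarrow> 'i set \<Rightarrow> 'i list set set" where
  "reflections m I = {cox_elem m I (w @ [i] @ rev w) | w i. w \<in> lists I \<and> i \<in> I}"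

definition bruhat_le :: "('i \<Rightarrow> 'i \<Rightarrow> nat) \<Rightarrow> 'i set \<Rightarrow> 'i list set \<Rightarrow> 'i list set \<Rightarrow> bool" where
  "bruhat_le m I u v \<longleftrightarrow> u \<in> cox_group m I \<and>
     (u, v) \<in> {(x, cox_mult m I x t) | x t. x \<in> cox_group m I \<and> t \<in> reflections m I
                 \<and> cox_len x < cox_len (cox_mult m I x t)}\<^sup>*"

text \<open>Coxeter matrix of a Weyl group of a semisimple group: finite index set,
 symmetric, off-diagonal entries crystallographic (2,3,4,6); together with finiteness of W
 this characterizes Weyl groups of (reduced) root systems.\<close>
definition weyl_matrix :: "('i \<Rightarrow> 'i \<Rightarrow> nat) \<Rightarrow> 'i set \<Rightarrow> bool" where
  "weyl_matrix m I \<longleftrightarrow> finite I \<and> (\<forall>i\<in>I. m i i = 1) \<and>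
     (\<forall>i\<in>I. \<forall>j\<in>I. m i j = m j i \<and> (i \<noteq> j \<longrightarrow> m i j \<in> {2, 3, 4, 6}))"

end

theory Submission
  imports Defs
begin

text \<open>The argument runs through the reflection cocycle: for a word \<open>ws\<close> and a reflection \<open>t\<close>, let
  \<open>\<eta>(ws, t)\<close> be the parity of the number of occurrences of \<open>t\<close> in the reflection sequence
  \<open>s\<^sub>1, s\<^sub>1 s\<^sub>2 s\<^sub>1, s\<^sub>1 s\<^sub>2 s\<^sub>3 s\<^sub>2 s\<^sub>1, \<dots>\<close> of \<open>ws\<close>. It is invariant under the Coxeter relations (the
  reflection sequences of the two sides of a braid relation are reverses of each other), so it
  is a function on \<open>W\<close>, and \<open>t\<close> shortens \<open>g\<close> on the left exactly when \<open>\<eta>(g, t)\<close> holds.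

  Then follow a Bruhat chain from \<open>v'\<close> up to \<open>v\<close> one step \<open>y < z = y t\<close> at a time, keeping
  \<open>z \<in> W\<^sub>J\<close> and \<open>u w = x z\<close>. As \<open>t\<close> shortens \<open>z \<in> W\<^sub>J\<close>, it lies in \<open>W\<^sub>J\<close>; hence neither \<open>w\<close> nor
  \<open>x\<close> is shortened on the right by \<open>t\<close> or its conjugate \<open>z t z\<^sup>-\<^sup>1\<close>, both being minimal in their
  cosets. The cocycle rule for inversion sets then forces \<open>w t w\<^sup>-\<^sup>1\<close> to shorten \<open>u\<close>, so
  \<open>u\<^sub>1 = u w t w\<^sup>-\<^sup>1 < u\<close> and \<open>u\<^sub>1 w = x y\<close>.\<close>

lemma set_alt: "set (alt i j n) \<subseteq> {i, j}"
  by (induction n arbitrary: i j) auto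

lemma length_alt [simp]: "length (alt i j n) = n"
  by (induction n arbitrary: i j) auto

lemma alt_Suc_right: "alt i j (Suc n) = alt i j n @ [if even n then i else j]"
  by (induction n arbitrary: i j) auto

lemma alt_add: "alt i j (a + b) = alt i j a @ (if even a then alt i j b else alt j i b)"
  by (induction a arbitrary: i j) auto

lemma take_alt: "k \<le> n \<Longrightarrow> take k (alt i j n) = alt i j k"
  by (induction n arbitrary: i j k) (auto simp: take_Cons split: nat.splits)

lemma nth_alt: "k < n \<Longrightarrow> alt i j n ! k = (if even k then i else j)"
  by (induction n arbitrary: i j k) (auto simp: nth_Cons split: nat.splits)

lemma rev_alt: "rev (alt i j n) = (if even n then alt j i n else alt i j n)"
proof (induction n arbitrary: i j)
  case (Suc n)
  have "rev (alt i j (Suc n)) = rev (alt j i n) @ [i]" by simp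
  also have "\<dots> = (if even n then alt i j n @ [i] else alt j i n @ [i])" using Suc.IH by simp
  also have "\<dots> = (if even (Suc n) then alt j i (Suc n) else alt i j (Suc n))"
    by (simp only: alt_Suc_right) auto
  finally show ?case .
qed simp

fun refl_seq :: "'a list \<Rightarrow> 'a list list" where
  "refl_seq [] = []"
| "refl_seq (s # ws) = [s] # map (\<lambda>r. s # r @ [s]) (refl_seq ws)"

lemma length_refl_seq [simp]: "length (refl_seq ws) = length ws"
  by (induction ws) auto

lemma refl_seq_append: "refl_seq (a @ b) = refl_seq a @ map (\<lambda>r. a @ r @ rev a) (refl_seq b)"
  by (induction a) auto

lemma refl_seq_nth: "k < length ws \<Longrightarrow> refl_seq ws ! k = take k ws @ [ws ! k] @ rev (take k ws)"
  by (induction ws arbitrary: k) (auto simp: nth_Cons split: nat.splits)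

lemma refl_seq_lists: "ws \<in> lists A \<Longrightarrow> set (refl_seq ws) \<subseteq> lists A"
  by (induction ws) (auto, meson in_listsD subsetD)

lemma refl_seq_alt: "k < n \<Longrightarrow> refl_seq (alt i j n) ! k = alt i j (Suc (2 * k))"
proof -
  assume "k < n"
  then have "refl_seq (alt i j n) ! k = alt i j k @ [if even k then i else j] @ rev (alt i j k)"
    by (simp add: refl_seq_nth take_alt nth_alt)
  also have "\<dots> = alt i j (Suc k + k)"
    by (simp only: alt_add alt_Suc_right rev_alt) simp
  finally show ?thesis by (simp add: mult_2)
qed

lemma rev_in_lists_iff [simp]: "rev a \<in> lists A \<longleftrightarrow> a \<in> lists A"
  by auto

context
  fixes m :: "'i \<Rightarrow> 'i \<Rightarrow> nat" and I :: "'i set"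
begin

definition cox_equiv :: "'i list \<Rightarrow> 'i list \<Rightarrow> bool" (infix "\<sim>" 50)
  where "a \<sim> b \<longleftrightarrow> (a, b) \<in> cox_eq m I"

abbreviation ell :: "'i list \<Rightarrow> nat"
  where "ell a \<equiv> cox_len (cox_elem m I a)"

lemma cox_rels_lists: "(l, r) \<in> cox_rels m I \<Longrightarrow> l \<in> lists I \<and> r \<in> lists I"
  unfolding cox_rels_def using set_alt by fastforce

lemma cox_step_lists: "(a, b) \<in> cox_step m I \<Longrightarrow> a \<in> lists I \<and> b \<in> lists I"
  unfolding cox_step_def using cox_rels_lists by fastforce

lemma sym_cox_step: "sym (cox_step m I)"
  unfolding cox_step_def sym_def by blast

lemma cox_step_append:
  assumes "(a, b) \<in> cox_step m I" and "c \<in> lists I" and "d \<in> lists I"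
  shows "(c @ a @ d, c @ b @ d) \<in> cox_step m I"
proof -
  obtain xs ys l r where a: "a = xs @ l @ ys" and b: "b = xs @ r @ ys"
    and h: "xs \<in> lists I" "ys \<in> lists I" "(l, r) \<in> cox_rels m I \<or> (r, l) \<in> cox_rels m I"
    using assms(1) unfolding cox_step_def by blast
  have "c @ a @ d = (c @ xs) @ l @ (ys @ d)" "c @ b @ d = (c @ xs) @ r @ (ys @ d)"
    using a b by auto
  moreover have "c @ xs \<in> lists I" "ys @ d \<in> lists I" using h assms(2,3) by auto
  ultimately show ?thesis using h(3) unfolding cox_step_def by blast
qed

lemma cox_step_rtrancl_lists: "(a, b) \<in> (cox_step m I)\<^sup>* \<Longrightarrow> a \<in> lists I \<Longrightarrow> b \<in> lists I"
  by (induction rule: rtrancl_induct) (auto dest: cox_step_lists)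

lemma cox_equiv_iff_rtrancl: "a \<sim> b \<longleftrightarrow> a \<in> lists I \<and> (a, b) \<in> (cox_step m I)\<^sup>*"
proof -
  have "a \<in> lists I" if "(a, b) \<in> (cox_step m I)\<^sup>+"
    using that by (rule converse_tranclE) (auto dest: cox_step_lists)
  then show ?thesis
    unfolding cox_equiv_def cox_eq_def rtrancl_eq_or_trancl by (auto simp: Id_on_def)
qed

lemma cox_equiv_lists: "a \<sim> b \<Longrightarrow> a \<in> lists I \<and> b \<in> lists I"
  using cox_step_rtrancl_lists by (auto simp: cox_equiv_iff_rtrancl)

lemma cox_equiv_refl: "a \<in> lists I \<Longrightarrow> a \<sim> a"
  by (simp add: cox_equiv_iff_rtrancl)

lemma cox_equiv_sym: "a \<sim> b \<Longrightarrow> b \<sim> a"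
  using cox_equiv_lists[of a b] symD[OF sym_rtrancl[OF sym_cox_step], of a b]
  by (simp add: cox_equiv_iff_rtrancl)

lemma cox_equiv_trans [trans]: "a \<sim> b \<Longrightarrow> b \<sim> c \<Longrightarrow> a \<sim> c"
  by (auto simp: cox_equiv_iff_rtrancl)

lemma cox_equiv_append_cong:
  assumes "a \<sim> b" and x: "x \<in> lists I" and y: "y \<in> lists I"
  shows "x @ a @ y \<sim> x @ b @ y"
proof -
  have a: "a \<in> lists I" and steps: "(a, b) \<in> (cox_step m I)\<^sup>*"
    using assms(1) by (simp_all add: cox_equiv_iff_rtrancl)
  from steps have "(x @ a @ y, x @ b @ y) \<in> (cox_step m I)\<^sup>*"
  proof (induction rule: rtrancl_induct)
    case (step b c)
    then show ?case using cox_step_append[OF step.hyps(2) x y] by simp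
  qed simp
  moreover have "x @ a @ y \<in> lists I" using a x y by simp
  ultimately show ?thesis by (simp add: cox_equiv_iff_rtrancl)
qed

lemma cox_equiv_append: "a \<sim> b \<Longrightarrow> c \<sim> d \<Longrightarrow> a @ c \<sim> b @ d"
proof -
  assume ab: "a \<sim> b" and cd: "c \<sim> d"
  have "a @ c \<sim> b @ c"
    using cox_equiv_append_cong[OF ab, of "[]" c] cox_equiv_lists[OF cd] by simp
  also have "b @ c \<sim> b @ d"
    using cox_equiv_append_cong[OF cd, of b "[]"] cox_equiv_lists[OF ab] by simp
  finally show ?thesis .
qed

lemma cox_equiv_rel: "(l, r) \<in> cox_rels m I \<Longrightarrow> l \<sim> r"
proof -
  assume lr: "(l, r) \<in> cox_rels m I"
  have "([] @ l @ [], [] @ r @ []) \<in> cox_step m I"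
    unfolding cox_step_def using lr by blast
  then show ?thesis using cox_rels_lists[OF lr] by (simp add: cox_equiv_iff_rtrancl)
qed

lemma cox_equiv_double: "i \<in> I \<Longrightarrow> [i, i] \<sim> []"
  by (rule cox_equiv_rel) (auto simp: cox_rels_def)

lemma cox_equiv_append_rev: "a \<in> lists I \<Longrightarrow> a @ rev a \<sim> []"
proof (induction a)
  case (Cons i a)
  then have "[i] @ (a @ rev a) @ [i] \<sim> [i] @ [] @ [i]"
    by (intro cox_equiv_append cox_equiv_refl) auto
  with Cons.prems show ?case by (auto intro: cox_equiv_trans cox_equiv_double)
qed (simp add: cox_equiv_refl)

lemma cox_equiv_rev_append: "a \<in> lists I \<Longrightarrow> rev a @ a \<sim> []"
  using cox_equiv_append_rev[of "rev a"] by auto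

lemma cox_equiv_left_cancel:
  assumes c: "c \<in> lists I"
  shows "c @ a \<sim> c @ b \<longleftrightarrow> a \<sim> b"
proof
  assume cab: "c @ a \<sim> c @ b"
  have a: "a \<in> lists I" and b: "b \<in> lists I" using cox_equiv_lists[OF cab] by auto
  have "a \<sim> (rev c @ c) @ a"
    using cox_equiv_append[OF cox_equiv_rev_append[OF c] cox_equiv_refl[OF a]]
    by (simp add: cox_equiv_sym)
  also have "\<dots> \<sim> (rev c @ c) @ b"
    using cox_equiv_append[OF cox_equiv_refl[of "rev c"] cab] c by simp
  also have "\<dots> \<sim> b"
    using cox_equiv_append[OF cox_equiv_rev_append[OF c] cox_equiv_refl[OF b]] by simp
  finally show "a \<sim> b" .
next
  assume "a \<sim> b"
  then show "c @ a \<sim> c @ b" using cox_equiv_append[OF cox_equiv_refl[OF c]] by blast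
qed

lemma cox_equiv_rev: "a \<sim> b \<Longrightarrow> rev a \<sim> rev b"
proof -
  assume ab: "a \<sim> b"
  then have a: "a \<in> lists I" and b: "b \<in> lists I" using cox_equiv_lists by auto
  have "rev a \<sim> rev a @ b @ rev b"
    using cox_equiv_append[OF cox_equiv_refl cox_equiv_append_rev[OF b], of "rev a"] a
    by (simp add: cox_equiv_sym)
  also have "\<dots> \<sim> rev a @ a @ rev b"
    using cox_equiv_append[OF cox_equiv_refl cox_equiv_append[OF cox_equiv_sym[OF ab] cox_equiv_refl],
        of "rev a" "rev b"] a b by simp
  also have "\<dots> \<sim> rev b"
    using cox_equiv_append[OF cox_equiv_rev_append[OF a] cox_equiv_refl, of "rev b"] b by simp
  finally show ?thesis .
qed

lemma cox_equiv_right_cancel: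
  assumes c: "c \<in> lists I"
  shows "a @ c \<sim> b @ c \<longleftrightarrow> a \<sim> b"
proof
  assume "a @ c \<sim> b @ c"
  then have "rev a \<sim> rev b"
    using cox_equiv_rev[of "a @ c" "b @ c"] cox_equiv_left_cancel[of "rev c"] c by simp
  then show "a \<sim> b" using cox_equiv_rev[of "rev a" "rev b"] by simp
next
  assume "a \<sim> b"
  then show "a @ c \<sim> b @ c" using cox_equiv_append[OF _ cox_equiv_refl[OF c]] by blast
qed

lemma cox_equiv_conj_iff:
  assumes a: "a \<in> lists I" and r: "r \<in> lists I"
  shows "a @ r @ rev a \<sim> t \<longleftrightarrow> r \<sim> rev a @ t @ a"
proof -
  have conj: "rev a @ (a @ r @ rev a) @ a \<sim> r"
    using cox_equiv_append[OF cox_equiv_rev_append[OF a]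
        cox_equiv_append[OF cox_equiv_refl[OF r] cox_equiv_rev_append[OF a]]] by simp
  have "a @ r @ rev a \<sim> t \<longleftrightarrow> rev a @ (a @ r @ rev a) @ a \<sim> rev a @ t @ a"
    using cox_equiv_left_cancel[of "rev a" "a @ r @ rev a" t]
      cox_equiv_right_cancel[of a "rev a @ a @ r @ rev a" "rev a @ t"] a by simp
  then show ?thesis
    using cox_equiv_trans[OF conj] cox_equiv_trans[OF cox_equiv_sym[OF conj]] by blast
qed

lemma in_cox_elem_iff: "b \<in> cox_elem m I a \<longleftrightarrow> a \<sim> b"
  by (simp add: cox_elem_def cox_equiv_def)

lemma cox_elem_eqI: "a \<sim> b \<Longrightarrow> cox_elem m I a = cox_elem m I b"
proof (rule set_eqI)
  fix c assume ab: "a \<sim> b"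
  show "c \<in> cox_elem m I a \<longleftrightarrow> c \<in> cox_elem m I b"
    using cox_equiv_trans[OF ab, of c] cox_equiv_trans[OF cox_equiv_sym[OF ab], of c]
    by (auto simp: in_cox_elem_iff)
qed

lemma cox_elem_eq_iff: "a \<in> lists I \<Longrightarrow> cox_elem m I a = cox_elem m I b \<longleftrightarrow> a \<sim> b"
  using cox_elem_eqI in_cox_elem_iff cox_equiv_refl cox_equiv_sym by blast

lemma cox_mult_cox_elem:
  assumes a: "a \<in> lists I" and b: "b \<in> lists I"
  shows "cox_mult m I (cox_elem m I a) (cox_elem m I b) = cox_elem m I (a @ b)"
proof -
  have "{cox_elem m I (a' @ b') | a' b'. a' \<in> cox_elem m I a \<and> b' \<in> cox_elem m I b}
      = {cox_elem m I (a @ b)}"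
    using a b cox_equiv_refl cox_elem_eqI[OF cox_equiv_append]
    by (auto simp: in_cox_elem_iff)
  then show ?thesis unfolding cox_mult_def by simp
qed

lemma ell_le_length: "a \<sim> b \<Longrightarrow> ell a \<le> length b"
  unfolding cox_len_def by (rule Least_le) (auto simp: in_cox_elem_iff)

lemma ell_reduced_word:
  assumes "a \<in> lists I"
  obtains b where "a \<sim> b" and "length b = ell a"
proof -
  have "a \<in> cox_elem m I a" using cox_equiv_refl[OF assms] by (simp add: in_cox_elem_iff)
  then have "\<exists>n. \<exists>b \<in> cox_elem m I a. length b = n" by blast
  then have "\<exists>b \<in> cox_elem m I a. length b = ell a"
    unfolding cox_len_def by (rule LeastI_ex)
  then show ?thesis using that by (auto simp: in_cox_elem_iff)
qed

lemma ell_rev_le: "a \<in> lists I \<Longrightarrow> ell (rev a) \<le> ell a"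
  by (metis cox_equiv_rev ell_le_length ell_reduced_word length_rev)

lemma ell_rev: "a \<in> lists I \<Longrightarrow> ell (rev a) = ell a"
  using ell_rev_le[of a] ell_rev_le[of "rev a"] by simp

definition refl_words :: "'i list set"
  where "refl_words = {p @ [i] @ rev p | p i. p \<in> lists I \<and> i \<in> I}"

lemma refl_words_lists: "t \<in> refl_words \<Longrightarrow> t \<in> lists I"
  by (auto simp: refl_words_def)

lemma rev_refl_word: "t \<in> refl_words \<Longrightarrow> rev t = t"
  by (auto simp: refl_words_def)

lemma refl_word_square: "t \<in> refl_words \<Longrightarrow> t @ t \<sim> []"
  using cox_equiv_append_rev[of t] refl_words_lists rev_refl_word by fastforce

lemma cox_equiv_append_refl_word:
  assumes "a \<sim> b @ t" and t: "t \<in> refl_words"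
  shows "a @ t \<sim> b"
proof -
  have b: "b \<in> lists I" using cox_equiv_lists[OF assms(1)] by simp
  have "a @ t \<sim> b @ t @ t"
    using cox_equiv_append[OF assms(1) cox_equiv_refl[OF refl_words_lists[OF t]]] by simp
  also have "\<dots> \<sim> b @ []"
    using cox_equiv_append[OF cox_equiv_refl[OF b] refl_word_square[OF t]] .
  finally show ?thesis by simp
qed

lemma refl_word_conj: "a \<in> lists I \<Longrightarrow> t \<in> refl_words \<Longrightarrow> a @ t @ rev a \<in> refl_words"
proof -
  assume a: "a \<in> lists I" and "t \<in> refl_words"
  then obtain p i where "t = p @ [i] @ rev p" "p \<in> lists I" "i \<in> I"
    by (auto simp: refl_words_def)
  moreover have "a @ t @ rev a = (a @ p) @ [i] @ rev (a @ p)" "a @ p \<in> lists I"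
    using calculation a by auto
  ultimately show ?thesis unfolding refl_words_def by blast
qed

lemma reflections_eq: "reflections m I = cox_elem m I ` refl_words"
  unfolding reflections_def refl_words_def by auto

section \<open>The reflection cocycle\<close>

definition refl_parity :: "'i list \<Rightarrow> 'i list \<Rightarrow> bool"
  where "refl_parity ws t \<longleftrightarrow> odd (length (filter (\<lambda>r. r \<sim> t) (refl_seq ws)))"

lemma refl_parity_Nil [simp]: "\<not> refl_parity [] t"
  by (simp add: refl_parity_def)

lemma refl_parity_append:
  assumes a: "a \<in> lists I" and b: "b \<in> lists I"
  shows "refl_parity (a @ b) t \<longleftrightarrow> refl_parity a t \<noteq> refl_parity b (rev a @ t @ a)"
proof -
  have "filter (\<lambda>r. a @ r @ rev a \<sim> t) (refl_seq b) = filter (\<lambda>r. r \<sim> rev a @ t @ a) (refl_seq b)"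
  proof (rule filter_cong[OF refl])
    fix r assume "r \<in> set (refl_seq b)"
    then have "r \<in> lists I" using refl_seq_lists[OF b] by blast
    then show "a @ r @ rev a \<sim> t \<longleftrightarrow> r \<sim> rev a @ t @ a" by (rule cox_equiv_conj_iff[OF a])
  qed
  then show ?thesis
    by (simp add: refl_parity_def refl_seq_append filter_map comp_def)
qed

lemma refl_parity_cong: "t \<sim> t' \<Longrightarrow> refl_parity ws t \<longleftrightarrow> refl_parity ws t'"
  unfolding refl_parity_def
  by (metis (no_types, lifting) cox_equiv_sym cox_equiv_trans filter_cong)

lemma refl_parity_witness:
  assumes "refl_parity ws t"
  obtains k where "k < length ws" and "refl_seq ws ! k \<sim> t"
proof -
  have "filter (\<lambda>r. r \<sim> t) (refl_seq ws) \<noteq> []"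
    using assms unfolding refl_parity_def by (intro notI) simp
  then obtain r where "r \<in> set (refl_seq ws)" "r \<sim> t"
    by (auto simp: filter_empty_conv)
  then show ?thesis using that by (metis in_set_conv_nth length_refl_seq)
qed

lemma length_filter_cox_equiv_eq:
  "list_all2 (\<sim>) rs rs' \<Longrightarrow> length (filter (\<lambda>r. r \<sim> t) rs) = length (filter (\<lambda>r. r \<sim> t) rs')"
proof (induction rule: list_all2_induct)
  case (Cons r rs r' rs')
  then have "r \<sim> t \<longleftrightarrow> r' \<sim> t" using cox_equiv_sym cox_equiv_trans by blast
  then show ?case using Cons.IH by simp
qed simp

lemma cox_equiv_alt_odd:
  assumes braid: "alt i j n \<sim> alt j i n" and i: "i \<in> I" and j: "j \<in> I" and k: "k < n"
  shows "alt i j (Suc (2 * k)) \<sim> alt j i (Suc (2 * (n - Suc k)))"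
proof -
  define a where "a = Suc (2 * k)"
  define b where "b = Suc (2 * (n - Suc k))"
  have ji: "alt j i b \<in> lists I" "alt j i n \<in> lists I"
    using set_alt[of j i] i j by auto
  have "a + b = n + n" "odd a" "odd b" using k by (simp_all add: a_def b_def)
  then have "alt i j a @ rev (alt j i b) = alt i j n @ rev (alt j i n)"
    using alt_add[of i j a b] alt_add[of i j n n] rev_alt[of j i n] rev_alt[of j i b] by simp
  also have "\<dots> \<sim> alt j i n @ rev (alt j i n)"
    using cox_equiv_append[OF braid cox_equiv_refl] ji by simp
  also have "\<dots> \<sim> []"
    using cox_equiv_append_rev ji by blast
  also have "[] \<sim> alt j i b @ rev (alt j i b)"
    using cox_equiv_sym[OF cox_equiv_append_rev] ji by blast
  finally have "alt i j a \<sim> alt j i b"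
    using cox_equiv_right_cancel[of "rev (alt j i b)"] ji by simp
  then show ?thesis unfolding a_def b_def .
qed

lemma refl_parity_rel:
  assumes "(l, r) \<in> cox_rels m I"
  shows "refl_parity l t \<longleftrightarrow> refl_parity r t"
  using assms unfolding cox_rels_def
proof (elim UnE CollectE exE conjE)
  fix i assume lr: "(l, r) = ([i, i], [])" and i: "i \<in> I"
  have "[i, i, i] \<sim> [i]"
    using cox_equiv_append[OF cox_equiv_double[OF i] cox_equiv_refl[of "[i]"]] i by simp
  then have "[i, i, i] \<sim> t \<longleftrightarrow> [i] \<sim> t"
    using cox_equiv_sym cox_equiv_trans by blast
  then show ?thesis using lr by (simp add: refl_parity_def)
next
  fix i j assume lr: "(l, r) = (alt i j (m i j), alt j i (m i j))"
    and i: "i \<in> I" and j: "j \<in> I" and "i \<noteq> j"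
  define n where "n = m i j"
  have braid: "alt i j n \<sim> alt j i n"
    using cox_equiv_rel assms lr unfolding n_def by simp
  have "list_all2 (\<sim>) (refl_seq (alt i j n)) (rev (refl_seq (alt j i n)))"
  proof (rule list_all2_all_nthI)
    fix k assume "k < length (refl_seq (alt i j n))"
    then have k: "k < n" by simp
    then have "rev (refl_seq (alt j i n)) ! k = alt j i (Suc (2 * (n - Suc k)))"
      by (simp add: rev_nth refl_seq_alt del: alt.simps(2))
    then show "refl_seq (alt i j n) ! k \<sim> rev (refl_seq (alt j i n)) ! k"
      using cox_equiv_alt_odd[OF braid i j k] refl_seq_alt[OF k, of i j] by simp
  qed simp
  from length_filter_cox_equiv_eq[OF this, of t] show ?thesis
    using lr unfolding refl_parity_def n_def by (simp add: rev_filter[symmetric])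
qed

lemma refl_parity_cox_step:
  assumes "(a, b) \<in> cox_step m I" and t: "t \<in> lists I"
  shows "refl_parity a t \<longleftrightarrow> refl_parity b t"
proof -
  obtain xs ys l r where a: "a = xs @ l @ ys" and b: "b = xs @ r @ ys"
    and xs: "xs \<in> lists I" and ys: "ys \<in> lists I"
    and lr: "(l, r) \<in> cox_rels m I \<or> (r, l) \<in> cox_rels m I"
    using assms(1) unfolding cox_step_def by blast
  have l: "l \<in> lists I" and r: "r \<in> lists I" and lr_equiv: "l \<sim> r"
    using lr cox_rels_lists cox_equiv_rel cox_equiv_sym by blast+
  define t' where "t' = rev xs @ t @ xs"
  have "refl_parity l t' \<longleftrightarrow> refl_parity r t'"
    using lr refl_parity_rel by metis
  moreover have "refl_parity ys (rev l @ t' @ l) \<longleftrightarrow> refl_parity ys (rev r @ t' @ r)"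
    using t xs by (intro refl_parity_cong cox_equiv_append cox_equiv_rev lr_equiv cox_equiv_refl)
      (simp add: t'_def)
  ultimately show ?thesis
    using refl_parity_append[OF xs] refl_parity_append[OF l ys] refl_parity_append[OF r ys] l r ys
    unfolding a b t'_def by simp
qed

lemma refl_parity_cox_equiv: "a \<sim> b \<Longrightarrow> t \<in> lists I \<Longrightarrow> refl_parity a t \<longleftrightarrow> refl_parity b t"
  unfolding cox_equiv_iff_rtrancl
  by (auto elim!: rtrancl_induct dest: refl_parity_cox_step)

lemma cox_equiv_delete:
  assumes ws: "ws \<in> lists I" and k: "k < length ws"
  shows "refl_seq ws ! k @ ws \<sim> take k ws @ drop (Suc k) ws"
proof -
  define p where "p = take k ws"
  define i where "i = ws ! k"
  define d where "d = drop (Suc k) ws"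
  have ws_eq: "ws = p @ [i] @ d"
    unfolding p_def i_def d_def using k by (simp add: id_take_nth_drop)
  then have p: "p \<in> lists I" and i: "i \<in> I" and d: "d \<in> lists I"
    using ws by auto
  have "[i] @ (rev p @ p) @ [i] \<sim> [i] @ [] @ [i]"
    using i by (intro cox_equiv_append cox_equiv_rev_append p cox_equiv_refl) simp_all
  also have "\<dots> \<sim> []"
    using cox_equiv_double[OF i] by simp
  finally have "p @ ([i] @ rev p @ p @ [i]) @ d \<sim> p @ [] @ d"
    using p d by (intro cox_equiv_append_cong) simp_all
  moreover have "refl_seq ws ! k = p @ [i] @ rev p"
    using refl_seq_nth[OF k] unfolding p_def i_def .
  ultimately show ?thesis
    using ws_eq unfolding p_def [symmetric] d_def [symmetric] by simp
qed

lemma refl_parity_lists: "refl_parity ws t \<Longrightarrow> t \<in> lists I"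
  by (metis cox_equiv_lists refl_parity_witness)

lemma ell_less_if_refl_parity:
  assumes ws: "ws \<in> lists I" and parity: "refl_parity ws t"
  shows "ell (t @ ws) < ell ws"
proof -
  have t: "t \<in> lists I" using refl_parity_lists[OF parity] .
  obtain w where w: "ws \<sim> w" "length w = ell ws" using ell_reduced_word[OF ws] by blast
  then have w_lists: "w \<in> lists I" using cox_equiv_lists by blast
  have "refl_parity w t" using parity refl_parity_cox_equiv[OF w(1) t] by simp
  then obtain k where k: "k < length w" "refl_seq w ! k \<sim> t" by (rule refl_parity_witness)
  have "t @ ws \<sim> refl_seq w ! k @ w"
    using cox_equiv_append[OF cox_equiv_sym[OF k(2)] w(1)] .
  also have "\<dots> \<sim> take k w @ drop (Suc k) w"
    using cox_equiv_delete[OF w_lists k(1)] .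
  finally have "ell (t @ ws) \<le> length (take k w @ drop (Suc k) w)"
    by (rule ell_le_length)
  also have "\<dots> < length w" using k(1) by simp
  finally show ?thesis using w(2) by simp
qed

lemma refl_parity_self:
  assumes "t \<in> refl_words"
  shows "refl_parity t t"
proof -
  obtain p i where t: "t = p @ [i] @ rev p" and p: "p \<in> lists I" and i: "i \<in> I"
    using assms by (auto simp: refl_words_def)
  define s where "s = rev p @ t @ p"
  have s: "s \<sim> [i]"
    using cox_equiv_append[OF cox_equiv_rev_append[OF p]
        cox_equiv_append[OF cox_equiv_refl[of "[i]"] cox_equiv_rev_append[OF p]]] i
    unfolding s_def t by simp
  have "[i] @ s @ [i] \<sim> [i] @ [i] @ [i]"
    using i by (intro cox_equiv_append cox_equiv_refl s) simp_all
  also have "\<dots> \<sim> [] @ [i]"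
    using cox_equiv_append[OF cox_equiv_double[OF i] cox_equiv_refl[of "[i]"]] i by simp
  finally have sis: "[i] @ s @ [i] \<sim> [i]" by simp
  have "refl_parity [i] s"
    using cox_equiv_sym[OF s] by (simp add: refl_parity_def)
  moreover have "refl_parity p t \<longleftrightarrow> refl_parity (rev p) s"
    using refl_parity_cox_equiv[OF cox_equiv_append_rev[OF p], of t] refl_parity_append[OF p, of "rev p" t]
      p i unfolding s_def t by simp
  ultimately show ?thesis
    using refl_parity_append[OF p, of "[i] @ rev p" t] refl_parity_append[of "[i]" "rev p" s]
      refl_parity_cong[OF sis] refl_parity_cong[OF s] p i
    unfolding s_def t by simp
qed

lemma refl_parity_refl_append:
  assumes t: "t \<in> refl_words" and ws: "ws \<in> lists I"
  shows "refl_parity (t @ ws) t \<longleftrightarrow> \<not> refl_parity ws t"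
proof -
  have t_lists: "t \<in> lists I" using refl_words_lists[OF t] .
  have "rev t @ t @ t \<sim> [] @ t"
    using cox_equiv_append[OF refl_word_square[OF t] cox_equiv_refl[OF t_lists]]
    by (simp add: rev_refl_word[OF t])
  then show ?thesis
    using refl_parity_append[OF t_lists ws, of t] refl_parity_self[OF t] refl_parity_cong by simp
qed

lemma ell_refl_left_less_iff:
  assumes t: "t \<in> refl_words" and ws: "ws \<in> lists I"
  shows "ell (t @ ws) < ell ws \<longleftrightarrow> refl_parity ws t"
proof
  have t_lists: "t \<in> lists I" using refl_words_lists[OF t] .
  assume shorter: "ell (t @ ws) < ell ws"
  show "refl_parity ws t"
  proof (rule ccontr)
    assume "\<not> refl_parity ws t"
    then have "ell (t @ t @ ws) < ell (t @ ws)"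
      using ell_less_if_refl_parity[of "t @ ws" t] refl_parity_refl_append[OF t ws] t_lists ws
      by simp
    moreover have "ell (t @ t @ ws) = ell ws"
      using cox_elem_eqI[OF cox_equiv_append[OF refl_word_square[OF t] cox_equiv_refl[OF ws]]]
      by simp
    ultimately show False using shorter by simp
  qed
qed (rule ell_less_if_refl_parity[OF ws])

lemma ell_refl_right_less_iff:
  assumes t: "t \<in> refl_words" and ws: "ws \<in> lists I"
  shows "ell (ws @ t) < ell ws \<longleftrightarrow> refl_parity (rev ws) t"
proof -
  have "ell (ws @ t) = ell (t @ rev ws)"
    using ell_rev[of "ws @ t"] ws refl_words_lists[OF t] by (simp add: rev_refl_word[OF t])
  then show ?thesis
    using ell_refl_left_less_iff[OF t, of "rev ws"] ell_rev[OF ws] ws by simp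
qed

text \<open>The cocycle rule \<open>N(ab) = N(b) \<triangle> b\<^sup>-\<^sup>1 N(a) b\<close> for the sets \<open>N(g)\<close> of reflections
  shortening \<open>g\<close> on the right.\<close>
lemma ell_refl_right_less_append:
  assumes t: "t \<in> refl_words" and a: "a \<in> lists I" and b: "b \<in> lists I"
  shows "ell (a @ b @ t) < ell (a @ b)
    \<longleftrightarrow> (ell (b @ t) < ell b) \<noteq> (ell (a @ b @ t @ rev b) < ell a)"
  using ell_refl_right_less_iff[OF t, of "a @ b"] ell_refl_right_less_iff[OF t b]
    ell_refl_right_less_iff[OF refl_word_conj[OF b t] a]
    refl_parity_append[of "rev b" "rev a" t] a b
  by simp

lemma lists_parabolic_subset: "J \<subseteq> I \<Longrightarrow> z \<in> lists J \<Longrightarrow> z \<in> lists I"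
  by (meson lists_mono subsetD)

lemma refl_word_descent_parabolic:
  assumes J: "J \<subseteq> I" and z: "z \<in> lists J" and t: "t \<in> refl_words"
    and shorter: "ell (z @ t) < ell z"
  obtains t' where "t' \<in> lists J" and "t \<sim> t'"
proof -
  have "refl_parity (rev z) t"
    using shorter ell_refl_right_less_iff[OF t lists_parabolic_subset[OF J z]] by simp
  then obtain k where k: "k < length z" "refl_seq (rev z) ! k \<sim> t"
    by (auto elim: refl_parity_witness)
  have "refl_seq (rev z) ! k \<in> lists J"
    using refl_seq_lists[of "rev z" J] z k(1) by (simp add: subset_iff)
  then show ?thesis using that cox_equiv_sym[OF k(2)] by blast
qed

lemma min_reps_ell_le:
  assumes J: "J \<subseteq> I" and x: "x \<in> lists I" and x_min: "cox_elem m I x \<in> min_reps m I J"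
    and y: "y \<in> lists J"
  shows "ell x \<le> ell (x @ y)"
proof -
  have "cox_elem m I y \<in> parabolic m I J" unfolding parabolic_def using y by blast
  then have "ell x \<le> cox_len (cox_mult m I (cox_elem m I x) (cox_elem m I y))"
    using x_min unfolding min_reps_def by blast
  then show ?thesis using cox_mult_cox_elem[OF x lists_parabolic_subset[OF J y]] by simp
qed

lemma min_reps_not_shortened:
  assumes J: "J \<subseteq> I" and x: "x \<in> lists I" and x_min: "cox_elem m I x \<in> min_reps m I J"
    and "t \<sim> t'" and t': "t' \<in> lists J"
  shows "\<not> ell (x @ t) < ell x"
proof -
  have "ell (x @ t) = ell (x @ t')"
    using cox_elem_eqI[OF cox_equiv_append[OF cox_equiv_refl[OF x] \<open>t \<sim> t'\<close>]] by simp
  then show ?thesis using min_reps_ell_le[OF J x x_min t'] by simp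
qed

lemma ell_conj_refl_less:
  assumes J: "J \<subseteq> I" and u: "u \<in> lists I" and w: "w \<in> lists I" and x: "x \<in> lists I"
    and z: "z \<in> lists J" and w_min: "cox_elem m I w \<in> min_reps m I J"
    and x_min: "cox_elem m I x \<in> min_reps m I J"
    and uw_xz: "u @ w \<sim> x @ z" and t: "t \<in> refl_words" and shorter: "ell (z @ t) < ell z"
  shows "ell (u @ w @ t @ rev w) < ell u"
proof -
  have z_lists: "z \<in> lists I" using lists_parabolic_subset[OF J z] .
  obtain t' where t': "t' \<in> lists J" "t \<sim> t'"
    using refl_word_descent_parabolic[OF J z t shorter] by blast
  have "\<not> ell (w @ t) < ell w"
    using min_reps_not_shortened[OF J w w_min t'(2) t'(1)] .
  moreover have "\<not> ell (x @ z @ t @ rev z) < ell x"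
  proof -
    have "z @ t @ rev z \<sim> z @ t' @ rev z"
      using z_lists by (intro cox_equiv_append_cong t'(2)) simp_all
    moreover have "z @ t' @ rev z \<in> lists J" using z t'(1) by simp
    ultimately show ?thesis using min_reps_not_shortened[OF J x x_min] by simp
  qed
  then have "ell (x @ z @ t) < ell (x @ z)"
    using ell_refl_right_less_append[OF t x z_lists] shorter by simp
  moreover have "u @ w @ t \<sim> x @ z @ t"
    using cox_equiv_append[OF uw_xz cox_equiv_refl[OF refl_words_lists[OF t]]] by simp
  ultimately show ?thesis
    using ell_refl_right_less_append[OF t u w] cox_elem_eqI[OF uw_xz] cox_elem_eqI by fastforce
qed

section \<open>Lifting Bruhat chains\<close>

definition bruhat_step :: "('i list set \<times> 'i list set) set"
  where "bruhat_step = {(g, cox_mult m I g r) | g r. g \<in> cox_group m I \<and> r \<in> reflections m I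
     \<and> cox_len g < cox_len (cox_mult m I g r)}"

lemma bruhat_le_iff: "bruhat_le m I g h \<longleftrightarrow> g \<in> cox_group m I \<and> (g, h) \<in> bruhat_step\<^sup>*"
  by (simp add: bruhat_le_def bruhat_step_def)

lemma bruhat_stepE:
  assumes "(g, h) \<in> bruhat_step"
  obtains a t where "a \<in> lists I" "t \<in> refl_words" "g = cox_elem m I a" "h = cox_elem m I (a @ t)"
    and "ell a < ell (a @ t)"
proof -
  obtain r where g: "g \<in> cox_group m I" and r: "r \<in> reflections m I"
    and h: "h = cox_mult m I g r" and longer: "cox_len g < cox_len h"
    using assms unfolding bruhat_step_def by blast
  obtain a t where "a \<in> lists I" "g = cox_elem m I a" "t \<in> refl_words" "r = cox_elem m I t"
    using g r unfolding cox_group_def reflections_eq by blast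
  moreover from calculation have "h = cox_elem m I (a @ t)"
    using h cox_mult_cox_elem refl_words_lists by simp
  ultimately show ?thesis using that longer by simp
qed

lemma bruhat_stepI:
  assumes a: "a \<in> lists I" and t: "t \<in> refl_words" and shorter: "ell (a @ t) < ell a"
  shows "(cox_elem m I (a @ t), cox_elem m I a) \<in> bruhat_step"
proof -
  have t_lists: "t \<in> lists I" using refl_words_lists[OF t] .
  have "a @ t @ t \<sim> a @ []"
    using cox_equiv_append[OF cox_equiv_refl[OF a] refl_word_square[OF t]] .
  then have "cox_mult m I (cox_elem m I (a @ t)) (cox_elem m I t) = cox_elem m I a"
    using cox_mult_cox_elem[of "a @ t" t] a t_lists cox_elem_eqI by simp
  moreover have "cox_elem m I (a @ t) \<in> cox_group m I" "cox_elem m I t \<in> reflections m I"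
    using a t t_lists unfolding cox_group_def reflections_eq by auto
  ultimately show ?thesis
    unfolding bruhat_step_def using shorter
    by (intro CollectI exI[of _ "cox_elem m I (a @ t)"] exI[of _ "cox_elem m I t"]) simp
qed

lemma bruhat_step_conj_refl:
  assumes J: "J \<subseteq> I" and u: "u \<in> lists I" and w: "w \<in> lists I" and x: "x \<in> lists I"
    and z: "z \<in> lists J" and w_min: "cox_elem m I w \<in> min_reps m I J"
    and x_min: "cox_elem m I x \<in> min_reps m I J"
    and uw_xz: "u @ w \<sim> x @ z" and t: "t \<in> refl_words" and shorter: "ell (z @ t) < ell z"
  shows "(cox_elem m I (u @ w @ t @ rev w), cox_elem m I u) \<in> bruhat_step"
    and "u @ w @ t @ rev w @ w \<sim> x @ z @ t"
proof -
  show "(cox_elem m I (u @ w @ t @ rev w), cox_elem m I u) \<in> bruhat_step"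
    using bruhat_stepI[OF u refl_word_conj[OF w t]] ell_conj_refl_less[OF assms] by simp
  have t_lists: "t \<in> lists I" using refl_words_lists[OF t] .
  have "u @ w @ t @ rev w @ w \<sim> u @ w @ t @ []"
    using cox_equiv_append_cong[OF cox_equiv_rev_append[OF w], of "u @ w @ t" "[]"] u w t_lists
    by simp
  also have "\<dots> \<sim> x @ z @ t"
    using cox_equiv_append[OF uw_xz cox_equiv_refl[OF t_lists]] by simp
  finally show "u @ w @ t @ rev w @ w \<sim> x @ z @ t" .
qed

lemma bruhat_step_lift:
  assumes J: "J \<subseteq> I" and w_min: "w \<in> min_reps m I J" and x_min: "x \<in> min_reps m I J"
    and u: "u \<in> cox_group m I" and z: "z \<in> parabolic m I J"
    and uw_xz: "cox_mult m I u w = cox_mult m I x z" and yz: "(y, z) \<in> bruhat_step"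
  shows "y \<in> parabolic m I J \<and> (\<exists>u1. (u1, u) \<in> bruhat_step \<and> cox_mult m I u1 w = cox_mult m I x y)"
proof -
  obtain Y T where Y: "Y \<in> lists I" and T: "T \<in> refl_words" and y: "y = cox_elem m I Y"
    and z_YT: "z = cox_elem m I (Y @ T)" and longer: "ell Y < ell (Y @ T)"
    using yz by (rule bruhat_stepE)
  obtain Z where Z: "Z \<in> lists J" and z_Z: "z = cox_elem m I Z"
    using z unfolding parabolic_def by blast
  obtain U W X where U: "U \<in> lists I" "u = cox_elem m I U" and W: "W \<in> lists I" "w = cox_elem m I W"
    and X: "X \<in> lists I" "x = cox_elem m I X"
    using u w_min x_min unfolding min_reps_def cox_group_def by blast
  have Z_lists: "Z \<in> lists I" and T_lists: "T \<in> lists I"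
    using lists_parabolic_subset[OF J Z] refl_words_lists[OF T] .
  have "Z \<sim> Y @ T" using z_YT z_Z cox_elem_eq_iff[OF Z_lists] by simp
  then have ZT_Y: "Z @ T \<sim> Y" using T by (rule cox_equiv_append_refl_word)
  have shorter: "ell (Z @ T) < ell Z"
    using longer z_YT z_Z cox_elem_eqI[OF ZT_Y] by simp
  obtain t' where t': "t' \<in> lists J" "T \<sim> t'"
    using refl_word_descent_parabolic[OF J Z T shorter] .
  have "Y \<sim> Z @ t'"
    using cox_equiv_trans[OF cox_equiv_sym[OF ZT_Y] cox_equiv_append[OF cox_equiv_refl[OF Z_lists] t'(2)]] .
  then have "y \<in> parabolic m I J"
    unfolding parabolic_def y using Z t'(1) cox_elem_eqI by auto
  moreover have "U @ W \<sim> X @ Z"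
    using uw_xz U W X z_Z cox_mult_cox_elem Z_lists cox_elem_eq_iff by auto
  note lift = bruhat_step_conj_refl[OF J U(1) W(1) X(1) Z _ _ this T shorter]
  have "U @ W @ T @ rev W @ W \<sim> X @ Y"
    using cox_equiv_trans[OF lift(2) cox_equiv_append[OF cox_equiv_refl[OF X(1)] ZT_Y]] w_min x_min W X
    by simp
  then have "cox_mult m I (cox_elem m I (U @ W @ T @ rev W)) w = cox_mult m I x y"
    using cox_mult_cox_elem U W X Y y T_lists cox_elem_eqI by simp
  ultimately show ?thesis using lift(1) w_min x_min U W X by auto
qed

lemma bruhat_chain_lift:
  assumes chain: "(v', z) \<in> bruhat_step\<^sup>*"
    and J: "J \<subseteq> I" and w_min: "w \<in> min_reps m I J" and x_min: "x \<in> min_reps m I J"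
    and "u \<in> cox_group m I" and "z \<in> parabolic m I J" and "cox_mult m I u w = cox_mult m I x z"
  shows "\<exists>u' \<in> cox_group m I. (u', u) \<in> bruhat_step\<^sup>* \<and> cox_mult m I u' w = cox_mult m I x v'"
  using chain assms(5-7)
proof (induction arbitrary: u rule: rtrancl_induct)
  case (step y z)
  obtain u1 where y: "y \<in> parabolic m I J" and u1_u: "(u1, u) \<in> bruhat_step"
    and u1_w: "cox_mult m I u1 w = cox_mult m I x y"
    using bruhat_step_lift[OF J w_min x_min step.prems step.hyps(2)] by blast
  have "u1 \<in> cox_group m I" using u1_u unfolding bruhat_step_def by blast
  then show ?case
    using step.IH[OF _ y u1_w] u1_u by (meson rtrancl_into_rtrancl)
qed blast

end

theorem lemma3p10:
  fixes m :: "'i \<Rightarrow> 'i \<Rightarrow> nat" and I J :: "'i set"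
    and u w x v v' :: "'i list set"
  assumes "weyl_matrix m I" and "finite (cox_group m I)"
    and "J \<subseteq> I"
    and "w \<in> min_reps m I J"
    and "u \<in> cox_group m I"
    and "cox_len (cox_mult m I u w) = cox_len u + cox_len w"
    and "x \<in> min_reps m I J" and "v \<in> parabolic m I J"
    and "cox_mult m I u w = cox_mult m I x v"
    and "v' \<in> cox_group m I" and "bruhat_le m I v' v"
  shows "\<exists>u' \<in> cox_group m I. bruhat_le m I u' u \<and> cox_mult m I u' w = cox_mult m I x v'"
proof -
  have "(v', v) \<in> (bruhat_step m I)\<^sup>*"
    using assms(11) by (simp add: bruhat_le_iff)
  from bruhat_chain_lift[OF this assms(3,4,7,5,8,9)] show ?thesis
    by (auto simp: bruhat_le_iff)
qed

end
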